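(* $(\mathcal D,\sqsubseteq)$ is a complete lattice.
   Context: Let $\mathcal V$ be a countably infinite set of variables. $\mathcal M$ is the set of maps $m:\mathcal V\to\mathbb N\cup\{\infty\}$, ordered pointwise ($m_1\sqsubseteq m_2$ iff $m_1(x)\le m_2(x)$ for all $x$). $\mathcal P$ is the set of discrete probability distributions on $\mathcal M$. For a subdistribution $\pi$ on $\mathcal M$ with total mass $|\pi|$, its weighting $\overline\pi:\mathcal V\to\mathbb R_{\ge0}\cup\{\infty\}$ is $\overline\pi(x)=\frac1{|\pi|}\sum_m\pi(m)m(x)$ if $|\pi|>0$, and $\overline\pi(x)=0$ otherwise. For $p_1,p_2\in\mathcal P$: $p_1\sqsubseteq p_2$ iff there is a coupling $\omega$ of $p_1,p_2$ (distribution on $\mathcal M\times\mathcal M$ with marginals $p_1$ and $p_2$) such that for all $m\in\mathcal M$, $\overline{\omega(\cdot,m)}(x)\le m(x)$ for all $x$, where $\omega(\cdot,m)$ is the subdistribution $m'\mapsto\omega(m',m)$. For $P\subseteq\mathcal P$, $\downarrow P=\{p\in\mathcal P\mid p\sqsubseteq p'\text{ for some }p'\in P\}$. $\mathcal D=\{P\subseteq\mathcal P\mid P\ne\emptyset,\ \downarrow P=P\}$, ordered by $P_1\sqsubseteq P_2$ iff for every $p_1\in P_1$ there is $p_2\in P_2$ with $p_1\sqsubseteq p_2$. *)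

theory Defs
  imports "HOL-Probability.Probability" "HOL-Algebra.Complete_Lattice"
begin

type_synonym 'v mem = "'v \<Rightarrow> enat"

definition mass :: "('a \<Rightarrow> real) \<Rightarrow> ennreal" where
  "mass \<pi> = (\<integral>\<^sup>+ m. ennreal (\<pi> m) \<partial>count_space UNIV)"

definition weighting :: "('v mem \<Rightarrow> real) \<Rightarrow> 'v \<Rightarrow> ennreal" where
  "weighting \<pi> x =
     (if mass \<pi> > 0
      then (\<integral>\<^sup>+ m. ennreal (\<pi> m) * ennreal_of_enat (m x) \<partial>count_space UNIV) / mass \<pi>
      else 0)"

definition is_coupling :: "('a \<times> 'b) pmf \<Rightarrow> 'a pmf \<Rightarrow> 'b pmf \<Rightarrow> bool" where
  "is_coupling \<omega> p1 p2 \<longleftrightarrow> map_pmf fst \<omega> = p1 \<and> map_pmf snd \<omega> = p2"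

definition le_dist :: "'v mem pmf \<Rightarrow> 'v mem pmf \<Rightarrow> bool" where
  "le_dist p1 p2 \<longleftrightarrow>
     (\<exists>\<omega>. is_coupling \<omega> p1 p2 \<and>
        (\<forall>m x. weighting (\<lambda>m'. pmf \<omega> (m', m)) x \<le> ennreal_of_enat (m x)))"

definition down_closure :: "'v mem pmf set \<Rightarrow> 'v mem pmf set" where
  "down_closure P = {p. \<exists>p'\<in>P. le_dist p p'}"

definition Dom :: "'v mem pmf set set" where
  "Dom = {P. P \<noteq> {} \<and> down_closure P = P}"

definition le_Dom :: "'v mem pmf set \<Rightarrow> 'v mem pmf set \<Rightarrow> bool" where
  "le_Dom P1 P2 \<longleftrightarrow> (\<forall>p1\<in>P1. \<exists>p2\<in>P2. le_dist p1 p2)"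

definition D_order :: "'v mem pmf set gorder" where
  "D_order = \<lparr>carrier = Dom, eq = (=), le = le_Dom\<rparr>"

end

theory Submission
  imports Defs
begin

text \<open>
  On down-closed sets of distributions the order \<open>le_Dom\<close> is plain
  inclusion, because \<open>le_dist\<close> is reflexive.  Moreover every member of \<open>Dom\<close>
  contains the Dirac distribution at the zero memory, since that distribution lies
  below every other one.  Both facts are instances of a single observation: pushing a
  distribution forward along a map \<open>f\<close> with \<open>f m \<le> m\<close> pointwise yields a smaller
  distribution (witnessed by the coupling concentrated on the graph of \<open>f\<close>).
  Hence \<open>Dom\<close> is a family of sets ordered by inclusion that contains \<open>UNIV\<close> and is
  closed under intersections of nonempty subfamilies; such a family is a complete
  lattice, with infima given by intersection.
\<close>

lemma weighting_point_mass:
  assumes "c \<ge> 0"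
  shows "weighting (\<lambda>m'. if m' = a then c else 0) x = (if c > 0 then ennreal_of_enat (a x) else 0)"
proof -
  have point: "(\<integral>\<^sup>+ m. (if m = a then d else 0) \<partial>count_space UNIV) = d" for d :: ennreal
  proof -
    have "(\<lambda>m. if m = a then d else 0) = (\<lambda>m. d * indicator {a} m)"
      by (auto simp: indicator_def)
    then show ?thesis by (simp add: nn_integral_cmult_indicator)
  qed
  have mass: "mass (\<lambda>m'. if m' = a then c else 0) = ennreal c"
    unfolding mass_def by (subst point[symmetric]) (rule nn_integral_cong, auto)
  have moment: "(\<integral>\<^sup>+ m. ennreal (if m = a then c else 0) * ennreal_of_enat (m x) \<partial>count_space UNIV)
      = ennreal c * ennreal_of_enat (a x)"
    by (subst point[symmetric]) (rule nn_integral_cong, auto)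
  show ?thesis
  proof (cases "c > 0")
    case True
    then have "ennreal c * ennreal_of_enat (a x) / ennreal c = ennreal_of_enat (a x)"
      by (metis ennreal_eq_0_iff ennreal_neq_top linorder_not_le mult.commute
          ennreal_mult_divide_eq)
    with True show ?thesis unfolding weighting_def mass moment by simp
  next
    case False
    then show ?thesis unfolding weighting_def mass by simp
  qed
qed

text \<open>Deterministically decreasing every memory yields a smaller distribution: the
  coupling \<open>(f m, m)\<close> has a point mass at \<open>f m\<close> in the column of \<open>m\<close>.\<close>

lemma le_dist_map_decreasing:
  assumes decreasing: "\<And>m x. f m x \<le> m x"
  shows "le_dist (map_pmf f p) p"
proof -
  define \<omega> where "\<omega> = map_pmf (\<lambda>m. (f m, m)) p"
  have coupling: "is_coupling \<omega> (map_pmf f p) p"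
    unfolding is_coupling_def \<omega>_def by (simp add: pmf.map_comp o_def)
  have column: "(\<lambda>m'. pmf \<omega> (m', m)) = (\<lambda>m'. if m' = f m then pmf p m else 0)" for m
  proof
    fix m'
    have "(\<lambda>m. (f m, m)) -` {(m', m)} = (if m' = f m then {m} else {})" by auto
    then show "pmf \<omega> (m', m) = (if m' = f m then pmf p m else 0)"
      unfolding \<omega>_def pmf_map by (auto simp: measure_pmf_single)
  qed
  have "weighting (\<lambda>m'. pmf \<omega> (m', m)) x \<le> ennreal_of_enat (m x)" for m x
    using decreasing[of m x] by (simp add: column weighting_point_mass)
  with coupling show ?thesis unfolding le_dist_def by blast
qed

lemma le_dist_refl: "le_dist p p"
  using le_dist_map_decreasing[of id p] by (simp add: pmf.map_id)

lemma le_dist_zero: "le_dist (return_pmf (\<lambda>_. 0)) p"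
  using le_dist_map_decreasing[of "\<lambda>_ _. 0" p] by (simp add: map_pmf_const)

lemma Dom_downward_closed: "P \<in> Dom \<Longrightarrow> p' \<in> P \<Longrightarrow> le_dist p p' \<Longrightarrow> p \<in> P"
  unfolding Dom_def down_closure_def by blast

lemma DomI:
  assumes "P \<noteq> {}" and "\<And>p p'. p' \<in> P \<Longrightarrow> le_dist p p' \<Longrightarrow> p \<in> P"
  shows "P \<in> Dom"
  using assms le_dist_refl unfolding Dom_def down_closure_def by blast

lemma le_Dom_iff_subset: "P1 \<in> Dom \<Longrightarrow> P2 \<in> Dom \<Longrightarrow> le_Dom P1 P2 \<longleftrightarrow> P1 \<subseteq> P2"
  unfolding le_Dom_def using Dom_downward_closed le_dist_refl by blast

lemma zero_in_Dom_member: "P \<in> Dom \<Longrightarrow> return_pmf (\<lambda>_. 0) \<in> P"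
  using Dom_downward_closed le_dist_zero unfolding Dom_def by blast

lemma UNIV_in_Dom: "UNIV \<in> Dom"
  by (rule DomI) auto

text \<open>Every member contains the zero distribution, so nonempty intersections are
  nonempty; down-closure is preserved by arbitrary intersections.\<close>

lemma Inter_in_Dom:
  assumes A: "A \<subseteq> Dom" "A \<noteq> {}"
  shows "\<Inter>A \<in> Dom"
proof (rule DomI)
  show "\<Inter>A \<noteq> {}"
    using A zero_in_Dom_member by blast
  show "p \<in> \<Inter>A" if "p' \<in> \<Inter>A" "le_dist p p'" for p p'
    using A that Dom_downward_closed by blast
qed

lemma D_order_partial_order: "partial_order D_order"
  by unfold_locales (auto simp: D_order_def le_Dom_iff_subset)

theorem proposition4:
  assumes "countable (UNIV :: 'v set)" and "infinite (UNIV :: 'v set)"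
  shows "complete_lattice (D_order :: 'v mem pmf set gorder)"
proof (rule partial_order.complete_lattice_criterion1[OF D_order_partial_order])
  have "greatest D_order UNIV (carrier D_order)"
    using UNIV_in_Dom by (auto simp: greatest_def D_order_def le_Dom_iff_subset)
  then show "\<exists>g. greatest (D_order :: 'v mem pmf set gorder) g (carrier D_order)" by blast
next
  fix A :: "'v mem pmf set set"
  assume "A \<subseteq> carrier D_order" "A \<noteq> {}"
  then have A: "A \<subseteq> Dom" "A \<noteq> {}" by (simp_all add: D_order_def)
  have lower: "Lower D_order A = {P \<in> Dom. \<forall>Q\<in>A. P \<subseteq> Q}"
    using A(1) by (auto simp: Lower_def D_order_def le_Dom_iff_subset subset_iff)
  have "greatest D_order (\<Inter>A) (Lower D_order A)"
    unfolding greatest_def lower using Inter_in_Dom[OF A]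
    by (auto simp: D_order_def le_Dom_iff_subset)
  then show "\<exists>i. greatest D_order i (Lower D_order A)" by blast
qed

end
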